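(* Let $R>0$, $K>0$, $B_i>0$, $C_i\ge0$, $\alpha\in[0,1)$ and $c\ge0$ with $\alpha>0$ or $c>0$. For $(p,m)$ in $S=\{(p,m): p\ge0,\ m\ge0,\ p+m\le B_i\}$ define $$U_i(p,m)=\frac{\big((1-\alpha)p+m\big)R}{K+p+m}-c\,e^{-p}\,\mathbf{1}[p>0]-C_i\,\mathbf{1}[m>0].$$ Then every maximizer $(p^*,m^* )$ of $U_i$ over $S$ with $(p^*,m^* )\neq(0,0)$ satisfies $(p^*,m^* )\in\{(B_i,0),(0,B_i)\}$; i.e., a participating stakeholder's best response is to invest all its stakes either in the pool or for self-mining.
   Context: Setting: a proof-of-stake blockchain with one stake pool (own stake $\sigma>0$, announced cost parameter $c$ and fee $\alpha$) and $N$ stakeholders. Stakeholder $i$ has budget $B_i$ and operational cost $C_i$, and chooses $p$ stakes to invest in the pool and $m$ stakes for self-mining with $p+m\le B_i$; the block reward is $R$. $K$ is the total stake of the pool owner and all other stakeholders (held fixed), so the total network stake is $K+p+m$. Investing $p>0$ in the pool yields expected reward $\frac{p}{K+p+m}(1-\alpha)R-c\,e^{-p}$; self-mining with $m>0$ yields $\frac{m}{K+p+m}R-C_i$; not participating ($p=m=0$) yields $0$. *)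

theory Defs
  imports Complex_Main
begin

definition U :: "real \<Rightarrow> real \<Rightarrow> real \<Rightarrow> real \<Rightarrow> real \<Rightarrow> real \<Rightarrow> real \<Rightarrow> real" where
  "U R K alpha c Ci p m =
     ((1 - alpha) * p + m) * R / (K + p + m)
     - (if p > 0 then c * exp (- p) else 0)
     - (if m > 0 then Ci else 0)"

definition S :: "real \<Rightarrow> (real \<times> real) set" where
  "S B = {(p, m). p \<ge> 0 \<and> m \<ge> 0 \<and> p + m \<le> B}"

end

theory Submission
  imports Defs
begin

text \<open>Moving the pool stake of a mixed strategy to self-mining keeps the total stake, so it
  gains the fee share \<open>\<alpha> p R / (K + p + m)\<close> and saves the pool cost \<open>c e\<^sup>-\<^sup>p\<close>, at least
  one of which is positive. Among pure strategies the share \<open>x / (K + x)\<close> of the reward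
  increases strictly with the stake \<open>x\<close>, while the pool cost \<open>c e\<^sup>-\<^sup>x\<close> decreases, so a pure
  strategy is only optimal when it uses the whole budget.\<close>

lemma share_strict_mono:
  fixes K x y :: real
  assumes "K > 0" "0 \<le> x" "x < y"
  shows "x / (K + x) < y / (K + y)"
proof -
  have "x * (K + y) < y * (K + x)" using assms by (simp add: algebra_simps)
  then show ?thesis using assms by (simp add: divide_simps)
qed

lemma U_mixed_lt_self_mining:
  fixes R K alpha c Ci p m :: real
  assumes "R > 0" "K > 0" "0 \<le> alpha" "c \<ge> 0" "alpha > 0 \<or> c > 0" "p > 0" "m > 0"
  shows "U R K alpha c Ci p m < U R K alpha c Ci 0 (p + m)"
proof -
  have gain: "U R K alpha c Ci 0 (p + m) - U R K alpha c Ci p m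
      = alpha * p * R / (K + p + m) + c * exp (- p)"
  proof -
    have "(p + m) * R / (K + (p + m)) - ((1 - alpha) * p + m) * R / (K + p + m)
        = alpha * p * R / (K + p + m)"
      by (simp add: add.assoc flip: diff_divide_distrib) (simp add: algebra_simps)
    then show ?thesis using assms(6,7) unfolding U_def by simp
  qed
  have "alpha * p * R / (K + p + m) \<ge> 0" "c * exp (- p) \<ge> 0"
    using assms by simp_all
  moreover have "alpha * p * R / (K + p + m) > 0 \<or> c * exp (- p) > 0"
    using assms by auto
  ultimately show ?thesis using gain by linarith
qed

lemma U_self_mining_strict_mono:
  fixes R K alpha c Ci m m' :: real
  assumes "R > 0" "K > 0" "0 < m" "m < m'"
  shows "U R K alpha c Ci 0 m < U R K alpha c Ci 0 m'"
proof -
  have "m / (K + m) * R < m' / (K + m') * R"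
    using share_strict_mono[of K m m'] assms by (intro mult_strict_right_mono) auto
  then show ?thesis using assms unfolding U_def by (simp add: mult.commute)
qed

lemma U_pool_strict_mono:
  fixes R K alpha c Ci p p' :: real
  assumes "R > 0" "K > 0" "alpha < 1" "c \<ge> 0" "0 < p" "p < p'"
  shows "U R K alpha c Ci p 0 < U R K alpha c Ci p' 0"
proof -
  have "p / (K + p) * ((1 - alpha) * R) < p' / (K + p') * ((1 - alpha) * R)"
    using share_strict_mono[of K p p'] assms by (intro mult_strict_right_mono) auto
  moreover have "c * exp (- p') \<le> c * exp (- p)"
    using assms by (simp add: mult_left_mono)
  ultimately show ?thesis using assms unfolding U_def by (simp add: ac_simps)
qed

theorem theorem3:
  fixes R K B Ci alpha c p m :: real
  assumes "R > 0" and "K > 0" and "B > 0" and "Ci \<ge> 0"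
    and "0 \<le> alpha" and "alpha < 1" and "c \<ge> 0" and "alpha > 0 \<or> c > 0"
    and "(p, m) \<in> S B"
    and "\<forall>(p', m') \<in> S B. U R K alpha c Ci p' m' \<le> U R K alpha c Ci p m"
    and "(p, m) \<noteq> (0, 0)"
  shows "(p, m) \<in> {(B, 0), (0, B)}"
proof -
  have feasible: "p \<ge> 0" "m \<ge> 0" "p + m \<le> B" using assms(9) by (auto simp: S_def)
  have opt: "U R K alpha c Ci p' m' \<le> U R K alpha c Ci p m"
    if "p' \<ge> 0" "m' \<ge> 0" "p' + m' \<le> B" for p' m'
    using assms(10) that by (auto simp: S_def)
  consider "p > 0" "m > 0" | "p = 0" "0 < m" "m < B" | "p > 0" "p < B" "m = 0"
    | "(p, m) \<in> {(B, 0), (0, B)}"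
    using feasible assms(11) by fastforce
  then show ?thesis
  proof cases
    case 1
    then show ?thesis
      using U_mixed_lt_self_mining[of R K alpha c p m Ci] opt[of 0 "p + m"] feasible assms
      by linarith
  next
    case 2
    then show ?thesis
      using U_self_mining_strict_mono[of R K m B alpha c Ci] opt[of 0 B] assms by simp
  next
    case 3
    then show ?thesis
      using U_pool_strict_mono[of R K alpha c p B Ci] opt[of B 0] assms by simp
  qed
qed

end
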